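(* Let $C$ be a bivariate copula that is stochastically increasing (SI) or stochastically decreasing (SD). Then \[ \xi(C)\le|\rho(C)|, \] with equality if and only if $C\in\{W,\Pi,M\}$, where $W(u,v)=\max\{u+v-1,0\}$, $\Pi(u,v)=uv$ and $M(u,v)=\min\{u,v\}$.
   Context: A (bivariate) copula is a function $C:[0,1]^2\to[0,1]$ that is grounded, has uniform margins and is 2-increasing. For a copula $C$, $\rho(C)=12\int_{[0,1]^2}C(u,v)\,du\,dv-3$ (Spearman's rho) and $\xi(C)=6\int_0^1\int_0^1(\partial_1C(t,v))^2\,dt\,dv-2$ (Chatterjee's xi), with $\partial_1$ the partial derivative in the first argument. A copula $C$ is SI (resp. SD) if, for $(U,V)\sim C$, the map $u\mapsto P(V\ge v\mid U=u)$ is increasing (resp. decreasing) outside a Lebesgue null set for every $v$; equivalently, $C(\cdot,v)$ is concave (resp. convex) for every $v\in[0,1]$. *)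

theory Defs
  imports "HOL-Analysis.Analysis"
begin

text \<open>A bivariate copula, represented by a function real => real => real whose values
  are only relevant on the unit square [0,1]^2.\<close>
definition copula :: "(real \<Rightarrow> real \<Rightarrow> real) \<Rightarrow> bool" where
  "copula C \<longleftrightarrow>
     (\<forall>u\<in>{0..1}. C u 0 = 0 \<and> C 0 u = 0 \<and> C u 1 = u \<and> C 1 u = u) \<and>
     (\<forall>u1\<in>{0..1}. \<forall>u2\<in>{0..1}. \<forall>v1\<in>{0..1}. \<forall>v2\<in>{0..1}.
        u1 \<le> u2 \<longrightarrow> v1 \<le> v2 \<longrightarrow> C u2 v2 - C u2 v1 - C u1 v2 + C u1 v1 \<ge> 0)"

definition copW :: "real \<Rightarrow> real \<Rightarrow> real" where
  "copW u v = max (u + v - 1) 0"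

definition copPi :: "real \<Rightarrow> real \<Rightarrow> real" where
  "copPi u v = u * v"

definition copM :: "real \<Rightarrow> real \<Rightarrow> real" where
  "copM u v = min u v"

text \<open>Partial derivative in the first argument (set to 0 where it does not exist;
  copulas are Lipschitz, so this is a Lebesgue null set for every v).\<close>
definition d1 :: "(real \<Rightarrow> real \<Rightarrow> real) \<Rightarrow> real \<Rightarrow> real \<Rightarrow> real" where
  "d1 C t v = (if (\<lambda>s. C s v) differentiable (at t) then deriv (\<lambda>s. C s v) t else 0)"

definition spearman_rho :: "(real \<Rightarrow> real \<Rightarrow> real) \<Rightarrow> real" where
  "spearman_rho C = 12 * integral ({0..1} \<times> {0..1}) (\<lambda>(u, v). C u v) - 3"

definition chatterjee_xi :: "(real \<Rightarrow> real \<Rightarrow> real) \<Rightarrow> real" where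
  "chatterjee_xi C = 6 * integral {0..1} (\<lambda>v. integral {0..1} (\<lambda>t. (d1 C t v)\<^sup>2)) - 2"

definition SI :: "(real \<Rightarrow> real \<Rightarrow> real) \<Rightarrow> bool" where
  "SI C \<longleftrightarrow> (\<forall>v\<in>{0..1}. concave_on {0..1} (\<lambda>u. C u v))"

definition SD :: "(real \<Rightarrow> real \<Rightarrow> real) \<Rightarrow> bool" where
  "SD C \<longleftrightarrow> (\<forall>v\<in>{0..1}. convex_on {0..1} (\<lambda>u. C u v))"

definition eq_on_square :: "(real \<Rightarrow> real \<Rightarrow> real) \<Rightarrow> (real \<Rightarrow> real \<Rightarrow> real) \<Rightarrow> bool" where
  "eq_on_square C D \<longleftrightarrow> (\<forall>u\<in>{0..1}. \<forall>v\<in>{0..1}. C u v = D u v)"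

end

(*
  For an SI copula C every section F = C(-, v) is concave, so its derivative g (equal to
  d1 C t v for almost every t) is decreasing with values in [0, 1], the integral of g over
  [0, 1] is v and that of t * g t is v - integral F.
  Integrating |g s - g t| * (1 - |g s - g t|) >= 0 over s and t gives
  integral g^2 <= v^2 + 2 * integral F - v; integrated over v, this is exactly xi <= rho.
  Equality forces g to be almost everywhere constant or {0, 1}-valued for almost every v, i.e.
  the section is that of Pi or of M; 2-increasingness prevents mixing the two kinds, and
  continuity in v extends the identification to the whole square. An SD copula C is reduced to
  the SI copula v - C (1 - u) v of (1 - U, V), which has the same xi, the opposite rho and
  exchanges W and M.
*)

theory Submission
  imports Defs
begin

section \<open>Integrals on intervals and negligible sets\<close>

lemma negligible_countable:
  fixes S :: "'a::euclidean_space set"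
  assumes "countable S"
  shows "negligible S"
  using negligible_countable_Union[of "(\<lambda>x. {x}) ` S"] assms by auto

lemma has_integral_0_nonneg_imp_negligible:
  fixes f :: "'a::euclidean_space \<Rightarrow> real"
  assumes "(f has_integral 0) S" "\<And>x. x \<in> S \<Longrightarrow> 0 \<le> f x"
  shows "negligible {x\<in>S. f x \<noteq> 0}"
proof -
  have "f absolutely_integrable_on S"
    using assms by (intro nonnegative_absolutely_integrable_1) (auto simp: has_integral_integrable)
  then have int: "integrable lebesgue (\<lambda>x. indicator S x *\<^sub>R f x)"
    unfolding set_integrable_def .
  have "(LINT x:S | lebesgue. f x) = 0"
    using set_lebesgue_integral_eq_integral(2)[OF \<open>f absolutely_integrable_on S\<close>] assms(1)
    by (simp add: integral_unique)
  moreover have "AE x in lebesgue. 0 \<le> indicator S x *\<^sub>R f x"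
    using assms(2) by (auto simp: indicator_def)
  ultimately have "AE x in lebesgue. indicator S x *\<^sub>R f x = 0"
    using integral_nonneg_eq_0_iff_AE[OF int] by (simp add: set_lebesgue_integral_def)
  then obtain N where "negligible N" "{x. indicator S x *\<^sub>R f x \<noteq> 0} \<subseteq> N"
    unfolding eventually_ae_filter_negligible by blast
  then show ?thesis
    by (rule_tac negligible_subset) (auto simp: indicator_def)
qed

lemma closure_diff_negligible:
  fixes S N :: "'a::euclidean_space set"
  assumes "open S" "negligible N"
  shows "closure (S - N) = closure S"
proof
  show "closure (S - N) \<subseteq> closure S"
    by (rule closure_mono) blast
  have "x \<in> closure (S - N)" if "x \<in> S" for x
    unfolding closure_approachable
  proof (intro allI impI)
    fix e :: real
    assume "e > 0"
    then have "x \<in> ball x e \<inter> S"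
      using \<open>x \<in> S\<close> by simp
    then have "\<not> negligible (ball x e \<inter> S)"
      using assms(1) by (intro open_not_negligible open_Int open_ball) blast+
    then obtain y where "y \<in> ball x e \<inter> S" "y \<notin> N"
      using assms(2) negligible_subset by blast
    then show "\<exists>y\<in>S - N. dist y x < e"
      by (auto simp: dist_commute)
  qed
  then show "closure S \<subseteq> closure (S - N)"
    by (simp add: closure_minimal subsetI)
qed

lemma unit_interval_point_off_negligible:
  fixes N :: "real set"
  assumes "negligible N"
  obtains x where "x \<in> {0<..<1}" "x \<notin> N"
proof -
  have "\<not> negligible {0<..<1::real}"
    by (rule open_not_negligible) auto
  then have "\<not> {0<..<1} \<subseteq> N"
    using assms negligible_subset by metis
  then show ?thesis
    by (meson subsetI that)
qed

lemma integral_reflect_unit_interval: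
  fixes f :: "real \<Rightarrow> real"
  shows "integral {0..1} (\<lambda>t. f (1 - t)) = integral {0..1::real} f"
  using Henstock_Kurzweil_Integration.integral_reflect_real[of 0 "-1" "\<lambda>y. f (1 + y)"]
    integral_shift_real_ivl[of 0 1 1 f]
  by (simp add: add.commute)

lemma integral_between_constants:
  fixes f :: "real \<Rightarrow> real"
  assumes "f integrable_on {s..t}" "s \<le> t" "\<And>x. x \<in> {s..t} \<Longrightarrow> lo \<le> f x \<and> f x \<le> hi"
  shows "lo * (t - s) \<le> integral {s..t} f \<and> integral {s..t} f \<le> hi * (t - s)"
proof -
  have "integral {s..t} (\<lambda>x. lo) \<le> integral {s..t} f"
    by (rule integral_le) (use assms in auto)
  moreover have "integral {s..t} f \<le> integral {s..t} (\<lambda>x. hi)"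
    by (rule integral_le) (use assms in auto)
  ultimately show ?thesis
    using assms(2) by (simp add: mult.commute)
qed

(* A substitute for the fundamental theorem of calculus, whose library versions allow only
  finitely many exceptional points, while a concave function may be non-differentiable on a
  countable set. *)
lemma local_estimate_telescope:
  fixes h \<Phi> \<omega> :: "real \<Rightarrow> real"
  assumes h: "h integrable_on {a..b}" and d: "0 \<le> d" and n: "a + real n * d \<le> b"
    and est: "\<And>s t. a \<le> s \<Longrightarrow> s \<le> t \<Longrightarrow> t \<le> b \<Longrightarrow>
      \<bar>integral {s..t} h - (\<Phi> t - \<Phi> s)\<bar> \<le> (t - s) * (\<omega> t - \<omega> s + K * (t - s))"
  shows "\<bar>integral {a..a + real n * d} h - (\<Phi> (a + real n * d) - \<Phi> a)\<bar>
    \<le> d * (\<omega> (a + real n * d) - \<omega> a + K * (real n * d))"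
  using n
proof (induction n)
  case 0
  then show ?case by simp
next
  case (Suc n)
  define x where "x = a + real n * d"
  have x: "a \<le> x" "x \<le> x + d" "x + d \<le> b" and xs: "a + real (Suc n) * d = x + d"
    using Suc.prems d by (auto simp: x_def algebra_simps)
  have "integral {a..x} h + integral {x..x + d} h = integral {a..x + d} h"
    using x integrable_subinterval_real[OF h, of a "x + d"]
    by (intro Henstock_Kurzweil_Integration.integral_combine) auto
  moreover have "\<bar>integral {a..x} h - (\<Phi> x - \<Phi> a)\<bar> \<le> d * (\<omega> x - \<omega> a + K * (real n * d))"
    using Suc x by (simp add: x_def)
  moreover have "\<bar>integral {x..x + d} h - (\<Phi> (x + d) - \<Phi> x)\<bar> \<le> d * (\<omega> (x + d) - \<omega> x + K * d)"
    using est[OF x] by simp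
  ultimately show ?case
    unfolding xs by (simp add: x_def algebra_simps abs_le_iff)
qed

lemma has_integral_of_local_estimate:
  fixes h \<Phi> \<omega> :: "real \<Rightarrow> real"
  assumes "a \<le> b" and h: "h integrable_on {a..b}"
    and est: "\<And>s t. a \<le> s \<Longrightarrow> s \<le> t \<Longrightarrow> t \<le> b \<Longrightarrow>
      \<bar>integral {s..t} h - (\<Phi> t - \<Phi> s)\<bar> \<le> (t - s) * (\<omega> t - \<omega> s + K * (t - s))"
  shows "(h has_integral \<Phi> b - \<Phi> a) {a..b}"
proof -
  define c where "c = (b - a) * (\<omega> b - \<omega> a + K * (b - a))"
  have "\<bar>integral {a..b} h - (\<Phi> b - \<Phi> a)\<bar> \<le> c / real n" if "n \<ge> 1" for n
    using local_estimate_telescope[OF h _ _ est, of "(b - a) / n" n] that \<open>a \<le> b\<close>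
    by (simp add: c_def)
  moreover have "(\<lambda>n. c / real n) \<longlonglongrightarrow> 0"
    by (rule lim_const_over_n)
  ultimately have "\<bar>integral {a..b} h - (\<Phi> b - \<Phi> a)\<bar> \<le> 0"
    by (intro LIMSEQ_le_const) auto
  then show ?thesis
    using integrable_integral[OF h] by simp
qed

lemma eq_of_le_of_same_integral:
  fixes f h :: "real \<Rightarrow> real"
  assumes "continuous_on {a..b} f" "continuous_on {a..b} h" "a < b"
    and "\<And>x. x \<in> {a..b} \<Longrightarrow> f x \<le> h x"
    and "(f has_integral I) {a..b}" "(h has_integral I) {a..b}" "x \<in> {a..b}"
  shows "f x = h x"
  using has_integral_0_cbox_imp_0[of a b "\<lambda>x. h x - f x" x] has_integral_diff[OF assms(6,5)]
    continuous_on_diff[OF assms(2,1)] assms(3,4,7)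
  by simp

lemma has_integral_power:
  fixes a b :: real
  assumes "a \<le> b"
  shows "((\<lambda>x. x ^ k) has_integral (b ^ Suc k - a ^ Suc k) / Suc k) {a..b}"
proof -
  have "((\<lambda>x. x ^ Suc k / Suc k) has_real_derivative x ^ k) (at x within {a..b})" for x :: real
    using DERIV_cdivide[OF DERIV_pow[of "Suc k" x], of "Suc k"]
    by (simp add: has_field_derivative_at_within del: of_nat_Suc)
  then have "((\<lambda>x. x ^ k) has_integral (b ^ Suc k / Suc k - a ^ Suc k / Suc k)) {a..b}"
    by (intro fundamental_theorem_of_calculus assms)
       (simp add: has_real_derivative_iff_has_vector_derivative[symmetric])
  then show ?thesis
    by (simp add: diff_divide_distrib)
qed

section \<open>Copulas\<close>

lemma copula_margins:
  assumes "copula C" "u \<in> {0..1}"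
  shows "C u 0 = 0" "C 0 u = 0" "C u 1 = u" "C 1 u = u"
  using assms unfolding copula_def by auto

lemma copula_2_increasing:
  assumes "copula C" "0 \<le> u1" "u1 \<le> u2" "u2 \<le> 1" "0 \<le> v1" "v1 \<le> v2" "v2 \<le> 1"
  shows "C u1 v2 - C u1 v1 \<le> C u2 v2 - C u2 v1"
proof -
  have "C u2 v2 - C u2 v1 - C u1 v2 + C u1 v1 \<ge> 0"
    using assms unfolding copula_def by (meson atLeastAtMost_iff order_trans)
  then show ?thesis by simp
qed

lemma copula_increment_first:
  assumes "copula C" "0 \<le> u1" "u1 \<le> u2" "u2 \<le> 1" "v \<in> {0..1}"
  shows "0 \<le> C u2 v - C u1 v \<and> C u2 v - C u1 v \<le> u2 - u1"
  using copula_2_increasing[OF assms(1-4), of 0 v] copula_2_increasing[OF assms(1-4), of v 1]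
    copula_margins[OF assms(1)] assms(2-5)
  by auto

lemma copula_increment_second:
  assumes "copula C" "0 \<le> v1" "v1 \<le> v2" "v2 \<le> 1" "u \<in> {0..1}"
  shows "0 \<le> C u v2 - C u v1 \<and> C u v2 - C u v1 \<le> v2 - v1"
  using copula_2_increasing[OF assms(1) _ _ _ assms(2-4), of 0 u]
    copula_2_increasing[OF assms(1) _ _ _ assms(2-4), of u 1]
    copula_margins[OF assms(1)] assms(2-5)
  by auto

lemma copula_le_min:
  assumes "copula C" "u \<in> {0..1}" "v \<in> {0..1}"
  shows "C u v \<le> min u v"
  using copula_increment_first[OF assms(1), of 0 u v] copula_increment_second[OF assms(1), of 0 v u]
    copula_margins[OF assms(1)] assms(2,3)
  by auto

lemma copula_abs_increment_first:
  assumes "copula C" "a \<in> {0..1}" "c \<in> {0..1}" "v \<in> {0..1}"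
  shows "\<bar>C a v - C c v\<bar> \<le> \<bar>a - c\<bar>"
  using copula_increment_first[of C a c v] copula_increment_first[of C c a v] assms
  by (cases "a \<le> c") auto

lemma copula_abs_increment_second:
  assumes "copula C" "b \<in> {0..1}" "d \<in> {0..1}" "u \<in> {0..1}"
  shows "\<bar>C u b - C u d\<bar> \<le> \<bar>b - d\<bar>"
  using copula_increment_second[of C b d u] copula_increment_second[of C d b u] assms
  by (cases "b \<le> d") auto

lemma copula_lipschitz: "copula C \<Longrightarrow> 2-lipschitz_on ({0..1} \<times> {0..1}) (\<lambda>(u, v). C u v)"
proof (rule lipschitz_onI)
  fix x y :: "real \<times> real"
  assume "copula C" "x \<in> {0..1} \<times> {0..1}" "y \<in> {0..1} \<times> {0..1}"
  moreover obtain a b c d where xy: "x = (a, b)" "y = (c, d)" by fastforce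
  ultimately have "\<bar>C a b - C c b\<bar> \<le> \<bar>a - c\<bar>" "\<bar>C c b - C c d\<bar> \<le> \<bar>b - d\<bar>"
    using copula_abs_increment_first copula_abs_increment_second by auto
  moreover have "\<bar>a - c\<bar> \<le> dist x y" "\<bar>b - d\<bar> \<le> dist x y"
    using dist_fst_le[of x y] dist_snd_le[of x y] by (simp_all add: xy dist_real_def)
  ultimately show "dist ((\<lambda>(u, v). C u v) x) ((\<lambda>(u, v). C u v) y) \<le> 2 * dist x y"
    by (simp add: xy dist_real_def)
qed simp

lemma copula_continuous_on: "copula C \<Longrightarrow> continuous_on ({0..1} \<times> {0..1}) (\<lambda>(u, v). C u v)"
  by (rule lipschitz_on_continuous_on[OF copula_lipschitz])

lemma continuous_on_first_section:
  assumes "continuous_on ({0..1} \<times> {0..1}) (\<lambda>(u, v). D u v)" "v \<in> {0..1}"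
  shows "continuous_on {0..1} (\<lambda>u. D u v)"
proof -
  have "continuous_on {0..1} (\<lambda>u. (u, v))" "(\<lambda>u. (u, v)) ` {0..1} \<subseteq> {0..1} \<times> {0..1}"
    using assms(2) by (auto intro!: continuous_intros)
  from continuous_on_compose2[OF assms(1) this] show ?thesis
    by simp
qed

lemma continuous_on_second_section:
  assumes "continuous_on ({0..1} \<times> {0..1}) (\<lambda>(u, v). D u v)" "u \<in> {0..1}"
  shows "continuous_on {0..1} (\<lambda>v. D u v)"
proof -
  have "continuous_on {0..1} (\<lambda>v. (u, v))" "(\<lambda>v. (u, v)) ` {0..1} \<subseteq> {0..1} \<times> {0..1}"
    using assms(2) by (auto intro!: continuous_intros)
  from continuous_on_compose2[OF assms(1) this] show ?thesis
    by simp
qed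

lemma spearman_rho_iterated:
  assumes "continuous_on ({0..1} \<times> {0..1}) (\<lambda>(u, v). C u v)"
  shows "spearman_rho C = 12 * integral {0..1} (\<lambda>v. integral {0..1} (\<lambda>u. C u v)) - 3"
proof -
  have sq: "{0..1} \<times> {0..1} = cbox (0::real, 0::real) (1, 1)"
    by (simp add: cbox_Pair_eq)
  have "integral ({0..1} \<times> {0..1}) (\<lambda>(u, v). C u v)
      = integral {0..1} (\<lambda>u. integral {0..1} (\<lambda>v. C u v))"
    using integral_prod_continuous[of 0 0 1 1 "\<lambda>(u, v). C u v"] assms by (simp add: sq)
  also have "\<dots> = integral {0..1} (\<lambda>v. integral {0..1} (\<lambda>u. C u v))"
    using integral_swap_continuous[of 0 0 1 1 C] assms by (simp add: sq)
  finally show ?thesis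
    by (simp add: spearman_rho_def)
qed

lemma d1_eqI: "((\<lambda>s. C s v) has_real_derivative D) (at t) \<Longrightarrow> d1 C t v = D"
  unfolding d1_def by (auto simp: real_differentiable_def intro: DERIV_imp_deriv)

lemma d1_cong:
  assumes "open S" "t \<in> S" "\<And>s. s \<in> S \<Longrightarrow> C s v = D s v"
  shows "d1 C t v = d1 D t v"
proof -
  have ev: "eventually (\<lambda>s. C s v = D s v) (nhds t)"
    using assms by (auto simp: eventually_nhds)
  then have "(\<lambda>s. C s v) differentiable at t \<longleftrightarrow> (\<lambda>s. D s v) differentiable at t"
    unfolding real_differentiable_def using DERIV_cong_ev[OF refl ev refl] by simp
  with deriv_cong_ev[OF ev refl] show ?thesis
    by (simp add: d1_def)
qed

lemma spearman_rho_cong: "eq_on_square C D \<Longrightarrow> spearman_rho C = spearman_rho D"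
  unfolding spearman_rho_def eq_on_square_def by (auto intro!: integral_cong)

lemma chatterjee_xi_cong:
  assumes "eq_on_square C D"
  shows "chatterjee_xi C = chatterjee_xi D"
proof -
  have "d1 C t v = d1 D t v" if "t \<in> {0<..<1}" "v \<in> {0..1}" for t v
    using that assms by (intro d1_cong[of "{0<..<1}"]) (auto simp: eq_on_square_def)
  then have "integral {0..1} (\<lambda>t. (d1 C t v)\<^sup>2) = integral {0..1} (\<lambda>t. (d1 D t v)\<^sup>2)"
    if "v \<in> {0..1}" for v
    using that by (intro integral_spike[of "{0, 1}"]) auto
  then have "integral {0..1} (\<lambda>v. integral {0..1} (\<lambda>t. (d1 C t v)\<^sup>2))
    = integral {0..1} (\<lambda>v. integral {0..1} (\<lambda>t. (d1 D t v)\<^sup>2))"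
    by (rule integral_cong)
  then show ?thesis
    by (simp add: chatterjee_xi_def)
qed

section \<open>The copulas Pi and M\<close>

lemma min_has_real_derivative:
  fixes v :: real
  assumes "t \<noteq> v"
  shows "((\<lambda>s. min s v) has_real_derivative (if t < v then 1 else 0)) (at t)"
proof (cases "t < v")
  case True
  have "((\<lambda>s. min s v) has_real_derivative 1) (at t)"
    by (rule has_field_derivative_transform_within_open[OF DERIV_ident, of "{..<v}"])
      (use True in auto)
  with True show ?thesis
    by simp
next
  case False
  have "((\<lambda>s. min s v) has_real_derivative 0) (at t)"
    by (rule has_field_derivative_transform_within_open[OF DERIV_const, of "{v<..}"])
      (use False assms in auto)
  with False show ?thesis
    by simp
qed

lemma copPi_continuous_on: "continuous_on ({0..1} \<times> {0..1}) (\<lambda>(u, v). copPi u v)"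
  unfolding copPi_def split_beta by (intro continuous_intros)

lemma spearman_rho_copPi: "spearman_rho copPi = 0"
proof -
  have "integral {0..1} (\<lambda>u. copPi u v) = v / 2" for v
    using has_integral_mult_left[OF has_integral_power[of 0 1 1], of v]
    by (simp add: copPi_def integral_unique)
  then have "integral {0..1} (\<lambda>v. integral {0..1} (\<lambda>u. copPi u v)) = integral {0..1} (\<lambda>v. v / 2)"
    by (rule integral_cong)
  then have "spearman_rho copPi = 12 * integral {0..1} (\<lambda>v. v / 2) - 3"
    by (simp add: spearman_rho_iterated[OF copPi_continuous_on])
  also have "\<dots> = 0"
    using has_integral_mult_left[OF has_integral_power[of 0 1 1], of "1/2"]
    by (simp add: integral_unique)
  finally show ?thesis .
qed

lemma chatterjee_xi_copPi: "chatterjee_xi copPi = 0"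
proof -
  have "d1 copPi t v = v" for t v
    unfolding copPi_def by (rule d1_eqI) (auto intro!: derivative_eq_intros)
  then have "chatterjee_xi copPi = 6 * integral {0..1} (\<lambda>v. v\<^sup>2) - 2"
    by (simp add: chatterjee_xi_def)
  also have "\<dots> = 0"
    using has_integral_power[of 0 1 2] by (simp add: integral_unique)
  finally show ?thesis .
qed

lemma has_integral_min_section:
  assumes "v \<in> {0..1}"
  shows "((\<lambda>u. min u v) has_integral v - v\<^sup>2 / 2) {0..1::real}"
proof -
  have "((\<lambda>u. min u v) has_integral v\<^sup>2 / 2) {0..v}"
  proof (rule has_integral_eq)
    show "((\<lambda>u. u) has_integral v\<^sup>2 / 2) {0..v}"
      using has_integral_power[of 0 v 1] assms by (simp add: power2_eq_square)
  qed auto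
  moreover have "((\<lambda>u. min u v) has_integral v * (1 - v)) {v..1}"
  proof (rule has_integral_eq)
    show "((\<lambda>u. v) has_integral v * (1 - v)) {v..1}"
      using has_integral_const_real[of v v 1] assms by (simp add: mult.commute)
  qed auto
  ultimately have "((\<lambda>u. min u v) has_integral v\<^sup>2 / 2 + v * (1 - v)) {0..1}"
    by (rule has_integral_combine[rotated 2]) (use assms in auto)
  then show ?thesis
    by (simp add: algebra_simps power2_eq_square)
qed

lemma copM_continuous_on: "continuous_on ({0..1} \<times> {0..1}) (\<lambda>(u, v). copM u v)"
  unfolding copM_def split_beta by (intro continuous_intros)

lemma spearman_rho_copM: "spearman_rho copM = 1"
proof -
  have "integral {0..1} (\<lambda>v. integral {0..1} (\<lambda>u. copM u v)) = integral {0..1} (\<lambda>v. v - v\<^sup>2 / 2)"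
    by (rule integral_cong) (simp add: copM_def integral_unique[OF has_integral_min_section])
  then have "spearman_rho copM = 12 * integral {0..1} (\<lambda>v. v - v\<^sup>2 / 2) - 3"
    by (simp add: spearman_rho_iterated[OF copM_continuous_on])
  also have "\<dots> = 1"
    using has_integral_diff[OF has_integral_power[of 0 1 1]
        has_integral_mult_left[OF has_integral_power[of 0 1 2], of "1/2"]]
    by (simp add: integral_unique)
  finally show ?thesis .
qed

lemma chatterjee_xi_copM: "chatterjee_xi copM = 1"
proof -
  have inner: "((\<lambda>t. (d1 copM t v)\<^sup>2) has_integral v) {0..1}" if "v \<in> {0..1}" for v
  proof -
    have "((\<lambda>t. (d1 copM t v)\<^sup>2) has_integral min 1 v - min 0 v) {0..1}"
    proof (rule fundamental_theorem_of_calculus_interior_strong[of "{v}"])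
      fix t assume "t \<in> {0<..<1} - {v}"
      \<comment> \<open>the slopes of min(-, v) are 0 and 1, so the square of d1 is again its derivative\<close>
      then have "((\<lambda>s. min s v) has_real_derivative (d1 copM t v)\<^sup>2) (at t)"
        using min_has_real_derivative[of t v] d1_eqI[of copM v _ t]
        by (auto simp: copM_def)
      then show "((\<lambda>s. min s v) has_vector_derivative (d1 copM t v)\<^sup>2) (at t)"
        by (simp add: has_real_derivative_iff_has_vector_derivative)
    qed (simp_all add: continuous_on_min continuous_on_id)
    then show ?thesis
      using that by simp
  qed
  have "integral {0..1} (\<lambda>v. integral {0..1} (\<lambda>t. (d1 copM t v)\<^sup>2)) = integral {0..1} (\<lambda>v. v)"
    by (rule integral_cong) (simp add: inner integral_unique)
  then have "chatterjee_xi copM = 6 * integral {0..1} (\<lambda>v. v) - 2"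
    by (simp add: chatterjee_xi_def)
  also have "\<dots> = 1"
    using has_integral_power[of 0 1 1] by (simp add: integral_unique)
  finally show ?thesis .
qed

section \<open>Reflection in the first variable\<close>

(* The copula of (1 - U, V) when (U, V) has copula C. *)
definition reflect_copula :: "(real \<Rightarrow> real \<Rightarrow> real) \<Rightarrow> real \<Rightarrow> real \<Rightarrow> real" where
  "reflect_copula C u v = v - C (1 - u) v"

lemma reflect_reflect_copula [simp]: "reflect_copula (reflect_copula C) = C"
  by (simp add: reflect_copula_def fun_eq_iff)

lemma reflect_copula_copM: "reflect_copula copM = copW"
  by (auto simp: reflect_copula_def copM_def copW_def fun_eq_iff min_def max_def)

lemma reflect_copula_copW: "reflect_copula copW = copM"
  using reflect_reflect_copula[of copM] by (simp add: reflect_copula_copM)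

lemma reflect_copula_copPi: "reflect_copula copPi = copPi"
  by (simp add: reflect_copula_def copPi_def fun_eq_iff algebra_simps)

lemma eq_on_square_reflect_copula:
  "eq_on_square C D \<Longrightarrow> eq_on_square (reflect_copula C) (reflect_copula D)"
  by (simp add: eq_on_square_def reflect_copula_def)

lemma eq_on_square_reflect_copula_iff:
  "eq_on_square (reflect_copula C) D \<longleftrightarrow> eq_on_square C (reflect_copula D)"
  using eq_on_square_reflect_copula[of "reflect_copula C" D]
    eq_on_square_reflect_copula[of C "reflect_copula D"]
  by auto

lemma copula_reflect_copula:
  assumes "copula C"
  shows "copula (reflect_copula C)"
  unfolding copula_def
proof (intro conjI ballI impI)
  fix u :: real
  assume "u \<in> {0..1}"
  then show "reflect_copula C u 0 = 0" "reflect_copula C 0 u = 0"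
    "reflect_copula C u 1 = u" "reflect_copula C 1 u = u"
    using copula_margins[OF assms, of u] copula_margins[OF assms, of "1 - u"]
    by (simp_all add: reflect_copula_def)
next
  fix u1 u2 v1 v2 :: real
  assume "u1 \<in> {0..1}" "u2 \<in> {0..1}" "v1 \<in> {0..1}" "v2 \<in> {0..1}" "u1 \<le> u2" "v1 \<le> v2"
  then show "reflect_copula C u2 v2 - reflect_copula C u2 v1 - reflect_copula C u1 v2
      + reflect_copula C u1 v1 \<ge> 0"
    using copula_2_increasing[OF assms, of "1 - u2" "1 - u1" v1 v2]
    by (simp add: reflect_copula_def)
qed

lemma SI_reflect_copula:
  assumes "SD C"
  shows "SI (reflect_copula C)"
  unfolding SI_def
proof
  fix v :: real
  assume "v \<in> {0..1}"
  then have cvx: "convex_on {0..1} (\<lambda>u. C u v)"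
    using assms by (simp add: SD_def)
  show "concave_on {0..1} (\<lambda>u. reflect_copula C u v)"
    unfolding concave_on_iff
  proof (intro conjI ballI allI impI)
    fix x y a b :: real
    assume "x \<in> {0..1}" "y \<in> {0..1}" "a \<ge> 0" "b \<ge> 0" "a + b = 1"
    moreover have "1 - (a * x + b * y) = a * (1 - x) + b * (1 - y)"
      using \<open>a + b = 1\<close> by (simp add: algebra_simps)
    ultimately have "C (1 - (a * x + b * y)) v \<le> a * C (1 - x) v + b * C (1 - y) v"
      using cvx by (simp add: convex_on_def)
    moreover have "a * v + b * v = v"
      using \<open>a + b = 1\<close> by (simp flip: distrib_right)
    ultimately show "a * reflect_copula C x v + b * reflect_copula C y v
        \<le> reflect_copula C (a *\<^sub>R x + b *\<^sub>R y) v"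
      by (simp add: reflect_copula_def algebra_simps)
  qed simp
qed

lemma has_real_derivative_reflect:
  assumes "(f has_real_derivative D) (at (1 - t))"
  shows "((\<lambda>s. c - f (1 - s)) has_real_derivative D) (at t)"
proof -
  have "((\<lambda>s. f (1 - s)) has_real_derivative D * (- 1)) (at t)"
    by (rule DERIV_chain2[where g="\<lambda>s. 1 - s", OF assms]) (auto intro!: derivative_eq_intros)
  from DERIV_diff[OF DERIV_const this] show ?thesis
    by simp
qed

lemma d1_reflect_copula: "d1 (reflect_copula C) t v = d1 C (1 - t) v"
proof (cases "(\<lambda>s. C s v) differentiable at (1 - t)")
  case True
  then obtain D where D: "((\<lambda>s. C s v) has_real_derivative D) (at (1 - t))"
    by (auto simp: real_differentiable_def)
  then have "((\<lambda>s. reflect_copula C s v) has_real_derivative D) (at t)"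
    unfolding reflect_copula_def by (rule has_real_derivative_reflect)
  with D show ?thesis
    by (simp add: d1_eqI)
next
  case False
  have "\<not> (\<lambda>s. reflect_copula C s v) differentiable at t"
  proof
    assume "(\<lambda>s. reflect_copula C s v) differentiable at t"
    then obtain D where "((\<lambda>s. reflect_copula C s v) has_real_derivative D) (at (1 - (1 - t)))"
      by (auto simp: real_differentiable_def)
    then have "((\<lambda>s. reflect_copula (reflect_copula C) s v) has_real_derivative D) (at (1 - t))"
      unfolding reflect_copula_def[of "reflect_copula C"] by (rule has_real_derivative_reflect)
    with False show False
      by (auto simp: real_differentiable_def)
  qed
  with False show ?thesis
    by (simp add: d1_def)
qed

lemma chatterjee_xi_reflect_copula: "chatterjee_xi (reflect_copula C) = chatterjee_xi C"
  using integral_reflect_unit_interval[of "\<lambda>t. (d1 C t v)\<^sup>2" for v]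
  by (simp add: chatterjee_xi_def d1_reflect_copula)

lemma spearman_rho_reflect_copula:
  assumes cont: "continuous_on ({0..1} \<times> {0..1}) (\<lambda>(u, v). C u v)"
  shows "spearman_rho (reflect_copula C) = - spearman_rho C"
proof -
  let ?S = "{0..1} \<times> {0..1} :: (real \<times> real) set"
  have sq: "?S = cbox (0, 0) (1, 1)"
    by (simp add: cbox_Pair_eq)
  have "continuous_on ?S (\<lambda>(u, v). (1 - u, v))" "(\<lambda>(u, v). (1 - u, v)) ` ?S \<subseteq> ?S"
    by (auto simp: split_beta intro!: continuous_intros)
  from continuous_on_compose2[OF cont this]
  have cont': "continuous_on ?S (\<lambda>(u, v). C (1 - u) v)"
    by (simp add: split_beta)
  have cont_snd: "continuous_on ?S (\<lambda>(u, v). v)"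
    by (simp add: split_beta continuous_on_snd)
  have "integral ?S (\<lambda>(u, v). C (1 - u) v)
      = integral {0..1} (\<lambda>u. integral {0..1} (\<lambda>v. C (1 - u) v))"
    using integral_prod_continuous[of 0 0 1 1 "\<lambda>(u, v). C (1 - u) v"] cont' by (simp add: sq)
  also have "\<dots> = integral {0..1} (\<lambda>u. integral {0..1} (\<lambda>v. C u v))"
    by (rule integral_reflect_unit_interval)
  also have "\<dots> = integral ?S (\<lambda>(u, v). C u v)"
    using integral_prod_continuous[of 0 0 1 1 "\<lambda>(u, v). C u v"] cont by (simp add: sq)
  finally have reflected: "integral ?S (\<lambda>(u, v). C (1 - u) v) = integral ?S (\<lambda>(u, v). C u v)" .
  have half: "integral ?S (\<lambda>(u, v). v) = 1 / 2"
    using integral_prod_continuous[OF cont_snd[unfolded sq]] has_integral_power[of 0 1 1]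
    by (simp add: sq cbox_interval integral_unique)
  have "integral ?S (\<lambda>(u, v). v - C (1 - u) v)
      = integral ?S (\<lambda>(u, v). v) - integral ?S (\<lambda>(u, v). C (1 - u) v)"
    using integral_diff[OF integrable_continuous[OF cont_snd[unfolded sq]]
        integrable_continuous[OF cont'[unfolded sq]]]
    by (simp add: sq case_prod_unfold)
  then show ?thesis
    using reflected half by (simp add: spearman_rho_def reflect_copula_def)
qed

lemma chatterjee_xi_eq_abs_spearman_rho_extremal:
  assumes "eq_on_square C copW \<or> eq_on_square C copPi \<or> eq_on_square C copM"
  shows "chatterjee_xi C = \<bar>spearman_rho C\<bar>"
proof -
  have "chatterjee_xi copW = 1" "spearman_rho copW = -1"
    using chatterjee_xi_reflect_copula[of copM] spearman_rho_reflect_copula[OF copM_continuous_on]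
    by (simp_all add: reflect_copula_copM chatterjee_xi_copM spearman_rho_copM)
  with assms show ?thesis
    using chatterjee_xi_cong spearman_rho_cong
    by (auto simp: chatterjee_xi_copPi spearman_rho_copPi chatterjee_xi_copM spearman_rho_copM)
qed

section \<open>Antitone slopes\<close>

(* F abstracts a concave section C(-, v) of a copula and g a decreasing slope function of it;
  in the application g is the left derivative, which equals d1 C (-) v almost everywhere. *)
locale antitone_slope =
  fixes F g :: "real \<Rightarrow> real"
  assumes F_0: "F 0 = 0"
    and slope_range: "t \<in> {0..1} \<Longrightarrow> 0 \<le> g t \<and> g t \<le> 1"
    and secant_bounds: "0 \<le> s \<Longrightarrow> s < t \<Longrightarrow> t \<le> 1 \<Longrightarrow>
      g t * (t - s) \<le> F t - F s \<and> F t - F s \<le> g s * (t - s)"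
begin

lemma secant_bounds_le:
  "0 \<le> s \<Longrightarrow> s \<le> t \<Longrightarrow> t \<le> 1 \<Longrightarrow> g t * (t - s) \<le> F t - F s \<and> F t - F s \<le> g s * (t - s)"
  using secant_bounds[of s t] by (cases "s = t") auto

lemma slope_nonneg: "t \<in> {0..1} \<Longrightarrow> 0 \<le> g t"
  using slope_range by blast

lemma slope_antitone: "0 \<le> s \<Longrightarrow> s \<le> t \<Longrightarrow> t \<le> 1 \<Longrightarrow> g t \<le> g s"
proof (cases "s = t")
  case False
  assume "0 \<le> s" "s \<le> t" "t \<le> 1"
  with False have "s < t"
    by simp
  with \<open>0 \<le> s\<close> \<open>t \<le> 1\<close> have "g t * (t - s) \<le> g s * (t - s)"
    using secant_bounds[of s t] by (meson order_trans)
  with \<open>s < t\<close> show ?thesis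
    by (simp add: mult_le_cancel_right)
qed simp

lemma increment_bounds: "0 \<le> s \<Longrightarrow> s \<le> t \<Longrightarrow> t \<le> 1 \<Longrightarrow> 0 \<le> F t - F s \<and> F t - F s \<le> t - s"
  using secant_bounds_le[of s t] slope_range[of s] slope_range[of t]
  by (smt (verit, best) atLeastAtMost_iff mult_left_le_one_le mult_nonneg_nonneg)

lemma F_mono: "0 \<le> s \<Longrightarrow> s \<le> t \<Longrightarrow> t \<le> 1 \<Longrightarrow> F s \<le> F t"
  using increment_bounds by fastforce

lemma continuous_on_F: "continuous_on {0..1} F"
proof (rule lipschitz_on_continuous_on[of 1], rule lipschitz_onI)
  fix x y :: real
  assume "x \<in> {0..1}" "y \<in> {0..1}"
  then show "dist (F x) (F y) \<le> 1 * dist x y"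
    using increment_bounds[of x y] increment_bounds[of y x]
    by (cases "x \<le> y") (auto simp: dist_real_def)
qed simp

lemma slope_integrable: "g integrable_on {0..1}"
proof -
  have "mono_on {0..1} (\<lambda>t. - g t)"
    by (intro mono_onI) (auto intro: slope_antitone)
  then show ?thesis
    using integrable_neg[OF integrable_on_mono_on] by fastforce
qed

lemma slope_sq_integrable: "(\<lambda>t. (g t)\<^sup>2) integrable_on {0..1}"
proof -
  have "mono_on {0..1} (\<lambda>t. - (g t)\<^sup>2)"
    by (intro mono_onI) (auto intro!: power_mono slope_antitone slope_nonneg)
  then show ?thesis
    using integrable_neg[OF integrable_on_mono_on] by fastforce
qed

lemma moment_integrable: "(\<lambda>t. t * g t) integrable_on {0..1}"
proof -
  have "g absolutely_integrable_on {0..1}"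
    using slope_integrable slope_range by (intro nonnegative_absolutely_integrable_1) auto
  then have "(\<lambda>t. t * g t) absolutely_integrable_on {0..1}"
    by (intro absolutely_integrable_bounded_measurable_product_real
        continuous_imp_measurable_on_sets_lebesgue) (auto intro: continuous_on_id)
  then show ?thesis
    by (simp add: absolutely_integrable_on_def)
qed

lemma has_integral_slope:
  assumes "0 \<le> a" "a \<le> b" "b \<le> 1"
  shows "(g has_integral F b - F a) {a..b}"
proof (rule has_integral_of_local_estimate[where \<omega>="\<lambda>t. - g t" and K=0])
  show "g integrable_on {a..b}"
    using integrable_subinterval_real[OF slope_integrable] assms by auto
  fix s t
  assume "a \<le> s" "s \<le> t" "t \<le> b"
  then have "g t * (t - s) \<le> integral {s..t} g \<and> integral {s..t} g \<le> g s * (t - s)"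
    using assms integrable_subinterval_real[OF slope_integrable, of s t]
    by (intro integral_between_constants) (auto intro: slope_antitone)
  moreover have "g t * (t - s) \<le> F t - F s \<and> F t - F s \<le> g s * (t - s)"
    using secant_bounds_le[of s t] assms \<open>a \<le> s\<close> \<open>s \<le> t\<close> \<open>t \<le> b\<close> by simp
  ultimately have "\<bar>integral {s..t} g - (F t - F s)\<bar> \<le> g s * (t - s) - g t * (t - s)"
    by (simp only: abs_le_iff) linarith
  then show "\<bar>integral {s..t} g - (F t - F s)\<bar> \<le> (t - s) * (- g t - - g s + 0 * (t - s))"
    by (simp add: algebra_simps)
qed fact

lemma F_integrable: "0 \<le> a \<Longrightarrow> b \<le> 1 \<Longrightarrow> F integrable_on {a..b}"
  using integrable_continuous_real[OF continuous_on_subset[OF continuous_on_F]] by auto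

lemma has_integral_moment: "((\<lambda>t. t * g t) has_integral F 1 - integral {0..1} F) {0..1}"
proof -
  \<comment> \<open>integration by parts: \<Phi> is an antiderivative of t * g t wherever F' = g\<close>
  define \<Phi> where "\<Phi> u = u * F u - integral {0..u} F" for u
  have "((\<lambda>t. t * g t) has_integral \<Phi> 1 - \<Phi> 0) {0..1}"
  proof (rule has_integral_of_local_estimate[where \<omega>="\<lambda>t. - g t" and K=1])
    fix s t :: real
    assume st: "0 \<le> s" "s \<le> t" "t \<le> 1"
    have g: "0 \<le> g t" "g t \<le> g s" "g s \<le> 1"
      using st slope_range[of s] slope_range[of t] slope_antitone[of s t] by auto
    have "s * g t * (t - s) \<le> integral {s..t} (\<lambda>x. x * g x)
        \<and> integral {s..t} (\<lambda>x. x * g x) \<le> t * g s * (t - s)"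
      using st integrable_subinterval_real[OF moment_integrable, of s t]
      by (intro integral_between_constants) (auto intro!: mult_mono slope_antitone slope_nonneg)
    moreover have "F s * (t - s) \<le> integral {s..t} F \<and> integral {s..t} F \<le> F t * (t - s)"
      using st F_integrable[of s t] F_mono
      by (intro integral_between_constants) auto
    moreover have "\<Phi> t - \<Phi> s = t * F t - s * F s - integral {s..t} F"
      using Henstock_Kurzweil_Integration.integral_combine[of 0 s t F] st F_integrable[of 0 t]
      by (simp add: \<Phi>_def)
    moreover have "s * (g t * (t - s)) \<le> s * (F t - F s)" "t * (F t - F s) \<le> t * (g s * (t - s))"
      using secant_bounds_le[OF st] st by (auto intro: mult_left_mono)
    moreover have "t * (g s - g t) \<le> g s - g t" "(t - s) * g t \<le> t - s"
      using st g by (auto intro: mult_left_le_one_le mult_left_le)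
    ultimately have "\<bar>integral {s..t} (\<lambda>x. x * g x) - (\<Phi> t - \<Phi> s)\<bar>
        \<le> (t * (g s - g t) + (t - s) * g t) * (t - s)"
      by (simp add: abs_le_iff algebra_simps) linarith
    also have "\<dots> \<le> (g s - g t + (t - s)) * (t - s)"
      using \<open>t * (g s - g t) \<le> g s - g t\<close> \<open>(t - s) * g t \<le> t - s\<close> st
      by (intro mult_right_mono) auto
    finally show "\<bar>integral {s..t} (\<lambda>x. x * g x) - (\<Phi> t - \<Phi> s)\<bar>
        \<le> (t - s) * (- g t - - g s + 1 * (t - s))"
      by (simp add: algebra_simps)
  qed (use moment_integrable in auto)
  then show ?thesis
    by (simp add: \<Phi>_def F_0)
qed

(* The inner integral of deviation has a closed form (has_integral_deviation), so integrating it
  once more over t needs no Fubini argument. *)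
definition deviation :: "real \<Rightarrow> real \<Rightarrow> real" where
  "deviation t s = \<bar>g s - g t\<bar> - (g s - g t)\<^sup>2"

lemma deviation_nonneg:
  assumes "s \<in> {0..1}" "t \<in> {0..1}"
  shows "0 \<le> deviation t s"
proof -
  have "\<bar>g s - g t\<bar> \<le> 1"
    using slope_range[OF assms(1)] slope_range[OF assms(2)] by auto
  then have "\<bar>g s - g t\<bar> * \<bar>g s - g t\<bar> \<le> \<bar>g s - g t\<bar>"
    using mult_left_le abs_ge_zero by blast
  moreover have "(g s - g t)\<^sup>2 = \<bar>g s - g t\<bar> * \<bar>g s - g t\<bar>"
    by (simp add: power2_eq_square)
  ultimately show ?thesis
    by (simp add: deviation_def)
qed

lemma has_integral_deviation:
  assumes t: "t \<in> {0..1}"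
  shows "(deviation t has_integral 2 * F t - F 1 + (1 - 2 * t) * g t
    - (integral {0..1} (\<lambda>s. (g s)\<^sup>2) - 2 * g t * F 1 + (g t)\<^sup>2)) {0..1}"
proof -
  define c where "c = g t"
  have const: "((\<lambda>s. c) has_integral c * (b - a)) {a..b}" if "a \<le> b" for a b
    using has_integral_const_real[of c a b] that by (simp add: mult.commute)
  have "((\<lambda>s. (g s)\<^sup>2 - 2 * c * g s + c\<^sup>2) has_integral
      integral {0..1} (\<lambda>s. (g s)\<^sup>2) - 2 * c * F 1 + c\<^sup>2) {0..1}"
    using has_integral_slope[of 0 1] const[of 0 1] has_integral_const_real[of "c\<^sup>2" 0 1]
      slope_sq_integrable
    by (intro has_integral_add has_integral_diff has_integral_mult_right) (auto simp: F_0)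
  then have sq: "((\<lambda>s. (g s - c)\<^sup>2) has_integral
      integral {0..1} (\<lambda>s. (g s)\<^sup>2) - 2 * c * F 1 + c\<^sup>2) {0..1}"
    by (simp add: power2_eq_square algebra_simps)
  have "((\<lambda>s. g s - c) has_integral F t - c * t) {0..t}"
    using has_integral_diff[OF has_integral_slope[of 0 t] const[of 0 t]] t by (simp add: F_0)
  then have left: "((\<lambda>s. \<bar>g s - g t\<bar>) has_integral F t - c * t) {0..t}"
    by (rule has_integral_eq[rotated]) (use t slope_antitone in \<open>auto simp: c_def\<close>)
  have "((\<lambda>s. c - g s) has_integral c * (1 - t) - (F 1 - F t)) {t..1}"
    using has_integral_diff[OF const[of t 1] has_integral_slope[of t 1]] t by simp
  then have right: "((\<lambda>s. \<bar>g s - g t\<bar>) has_integral c * (1 - t) - (F 1 - F t)) {t..1}"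
    by (rule has_integral_eq[rotated]) (use t slope_antitone in \<open>auto simp: c_def\<close>)
  have "((\<lambda>s. \<bar>g s - g t\<bar>) has_integral 2 * F t - F 1 + (1 - 2 * t) * c) {0..1}"
    using has_integral_combine[OF _ _ left right] t by (simp add: algebra_simps)
  from has_integral_diff[OF this sq] show ?thesis
    by (simp add: deviation_def[abs_def] c_def)
qed

lemma has_integral_total_deviation:
  "((\<lambda>t. integral {0..1} (deviation t)) has_integral
    2 * ((F 1)\<^sup>2 + 2 * integral {0..1} F - F 1 - integral {0..1} (\<lambda>s. (g s)\<^sup>2))) {0..1}"
proof -
  let ?A = "integral {0..1} (\<lambda>s. (g s)\<^sup>2)"
  let ?B = "integral {0..1} F"
  have B: "(F has_integral ?B) {0..1}"
    using F_integrable[of 0 1] by (simp add: integrable_integral)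
  have A: "((\<lambda>s. (g s)\<^sup>2) has_integral ?A) {0..1}"
    using slope_sq_integrable by (simp add: integrable_integral)
  have "((\<lambda>t. 2 * F t - F 1 + g t - 2 * (t * g t) - ?A + 2 * F 1 * g t - (g t)\<^sup>2) has_integral
      2 * ?B - F 1 + F 1 - 2 * (F 1 - ?B) - ?A + 2 * F 1 * F 1 - ?A) {0..1}"
    using has_integral_slope[of 0 1] has_integral_moment has_integral_const_real[of "F 1" 0 1]
      has_integral_const_real[of ?A 0 1] B A
    by (intro has_integral_add has_integral_diff has_integral_mult_right) (auto simp: F_0)
  then have "((\<lambda>t. 2 * F t - F 1 + g t - 2 * (t * g t) - ?A + 2 * F 1 * g t - (g t)\<^sup>2) has_integral
      2 * ((F 1)\<^sup>2 + 2 * ?B - F 1 - ?A)) {0..1}"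
    by (rule has_integral_eq_rhs) (simp add: power2_eq_square algebra_simps)
  then show ?thesis
  proof (rule has_integral_eq[rotated])
    fix t :: real
    assume "t \<in> {0..1}"
    then show "2 * F t - F 1 + g t - 2 * (t * g t) - ?A + 2 * F 1 * g t - (g t)\<^sup>2
      = integral {0..1} (deviation t)"
      using integral_unique[OF has_integral_deviation] by (simp add: algebra_simps)
  qed
qed

lemma integral_deviation_nonneg: "t \<in> {0..1} \<Longrightarrow> 0 \<le> integral {0..1} (deviation t)"
  using has_integral_deviation deviation_nonneg
  by (intro Henstock_Kurzweil_Integration.integral_nonneg) (auto simp: has_integral_integrable)

lemma slope_sq_integral_le:
  "integral {0..1} (\<lambda>t. (g t)\<^sup>2) \<le> (F 1)\<^sup>2 + 2 * integral {0..1} F - F 1"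
  using has_integral_nonneg[OF has_integral_total_deviation] integral_deviation_nonneg by force

lemma deviation_eq_0_imp:
  assumes "deviation t s = 0"
  shows "g s = g t \<or> \<bar>g s - g t\<bar> = 1"
proof -
  have "\<bar>g s - g t\<bar> = (g s - g t)\<^sup>2"
    using assms by (simp add: deviation_def)
  also have "\<dots> = \<bar>g s - g t\<bar> * \<bar>g s - g t\<bar>"
    by (metis abs_mult_self_eq power2_eq_square)
  finally have "\<bar>g s - g t\<bar> = 0 \<or> \<bar>g s - g t\<bar> = 1"
    by (metis mult_cancel_left1)
  then show ?thesis
    by auto
qed

lemma slope_sq_integral_of_deviation_0:
  assumes t: "t \<in> {0..1}" and "(deviation t has_integral 0) {0..1}"
  shows "integral {0..1} (\<lambda>t. (g t)\<^sup>2) = (F 1)\<^sup>2 \<or> integral {0..1} (\<lambda>t. (g t)\<^sup>2) = F 1"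
proof -
  let ?Z = "{s \<in> {0..1}. deviation t s \<noteq> 0}"
  have Z: "negligible ?Z"
    using assms by (intro has_integral_0_nonneg_imp_negligible) (auto intro: deviation_nonneg)
  define c where "c = g t"
  have jump: "g s = c \<or> \<bar>g s - c\<bar> = 1" if "s \<in> {0..1} - ?Z" for s
    using deviation_eq_0_imp[of t s] that by (simp add: c_def)
  have g: "(g has_integral F 1) {0..1}"
    using has_integral_slope[of 0 1] by (simp add: F_0)
  have A: "((\<lambda>s. (g s)\<^sup>2) has_integral integral {0..1} (\<lambda>t. (g t)\<^sup>2)) {0..1}"
    using slope_sq_integrable by (simp add: integrable_integral)
  consider "0 < c" "c < 1" | "c = 0 \<or> c = 1"
    using slope_range[OF t] unfolding c_def by linarith
  then show ?thesis
  proof cases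
    case 1
    then have const: "g s = c" if "s \<in> {0..1} - ?Z" for s
      using jump[OF that] slope_range[of s] that by auto
    have "((\<lambda>s. c) has_integral c) {0..1::real}" "((\<lambda>s. c\<^sup>2) has_integral c\<^sup>2) {0..1::real}"
      using has_integral_const_real[of c 0 1] has_integral_const_real[of "c\<^sup>2" 0 1] by simp_all
    then have "(g has_integral c) {0..1}" "((\<lambda>s. (g s)\<^sup>2) has_integral c\<^sup>2) {0..1}"
      using const by (auto intro: has_integral_spike[OF Z])
    then show ?thesis
      using g A has_integral_unique by blast
  next
    case 2
    then have "(g s)\<^sup>2 = g s" if "s \<in> {0..1} - ?Z" for s
      using jump[OF that] slope_range[of s] that by auto
    then have "((\<lambda>s. (g s)\<^sup>2) has_integral F 1) {0..1}"
      by (rule has_integral_spike[OF Z _ g])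
    then show ?thesis
      using A has_integral_unique by blast
  qed
qed

lemma slope_sq_integral_eq_cases:
  assumes "integral {0..1} (\<lambda>t. (g t)\<^sup>2) = (F 1)\<^sup>2 + 2 * integral {0..1} F - F 1"
  shows "integral {0..1} (\<lambda>t. (g t)\<^sup>2) = (F 1)\<^sup>2 \<or> integral {0..1} (\<lambda>t. (g t)\<^sup>2) = F 1"
proof -
  have "((\<lambda>t. integral {0..1} (deviation t)) has_integral 0) {0..1}"
    using has_integral_total_deviation assms by simp
  then have "negligible {t \<in> {0..1}. integral {0..1} (deviation t) \<noteq> 0}"
    by (rule has_integral_0_nonneg_imp_negligible) (rule integral_deviation_nonneg)
  then obtain t where "t \<in> {0<..<1}" "t \<notin> {t \<in> {0..1}. integral {0..1} (deviation t) \<noteq> 0}"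
    by (rule unit_interval_point_off_negligible)
  then have t: "t \<in> {0..1}" "integral {0..1} (deviation t) = 0"
    by simp_all
  have "(deviation t has_integral integral {0..1} (deviation t)) {0..1}"
    using has_integral_deviation[OF t(1)] by (intro integrable_integral has_integral_integrable)
  with t show ?thesis
    by (intro slope_sq_integral_of_deviation_0) simp_all
qed

lemma slope_le_secant_le_slope:
  "0 \<le> s \<Longrightarrow> s < t \<Longrightarrow> t \<le> 1 \<Longrightarrow> g t \<le> (F t - F s) / (t - s) \<and> (F t - F s) / (t - s) \<le> g s"
  using secant_bounds[of s t] by (simp add: field_simps)

lemma difference_quotient_between_slopes:
  assumes "y \<in> {0<..<1}" "t \<in> {0<..<1}" "y \<noteq> t"
  shows "min (g y) (g t) \<le> (F y - F t) / (y - t) \<and> (F y - F t) / (y - t) \<le> max (g y) (g t)"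
proof (cases "y < t")
  case True
  have "(F y - F t) / (y - t) = (F t - F y) / (t - y)"
    by (metis minus_diff_eq minus_divide_divide)
  moreover have "g t \<le> (F t - F y) / (t - y)" "(F t - F y) / (t - y) \<le> g y"
    using slope_le_secant_le_slope[of y t] True assms by auto
  ultimately show ?thesis
    by (simp add: min_le_iff_disj le_max_iff_disj)
next
  case False
  then have "g y \<le> (F y - F t) / (y - t)" "(F y - F t) / (y - t) \<le> g t"
    using slope_le_secant_le_slope[of t y] assms by auto
  then show ?thesis
    by (simp add: min_le_iff_disj le_max_iff_disj)
qed

lemma has_real_derivative_at_continuity_point:
  assumes t: "t \<in> {0<..<1}" and cont: "isCont g t"
  shows "(F has_real_derivative g t) (at t)"
proof -
  have "eventually (\<lambda>y. y \<in> {0<..<1} \<and> y \<noteq> t) (at t)"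
    using eventually_nhds_in_open[of "{0<..<1}" t] t
    by (auto simp: eventually_at_filter elim: eventually_mono)
  then have bounds: "eventually (\<lambda>y. min (g y) (g t) \<le> (F y - F t) / (y - t)
      \<and> (F y - F t) / (y - t) \<le> max (g y) (g t)) (at t)"
    by (rule eventually_mono) (use difference_quotient_between_slopes[OF _ t] in auto)
  have lower: "((\<lambda>y. min (g y) (g t)) \<longlongrightarrow> g t) (at t)"
    using tendsto_min[OF cont[unfolded isCont_def] tendsto_const, of "g t"] by simp
  have upper: "((\<lambda>y. max (g y) (g t)) \<longlongrightarrow> g t) (at t)"
    using tendsto_max[OF cont[unfolded isCont_def] tendsto_const, of "g t"] by simp
  have "((\<lambda>y. (F y - F t) / (y - t)) \<longlongrightarrow> g t) (at t)"
    by (rule tendsto_sandwich[OF _ _ lower upper]) (use bounds in \<open>auto elim: eventually_mono\<close>)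
  then show ?thesis
    by (simp add: has_field_derivative_iff)
qed

lemma countable_slope_discontinuities: "countable {t \<in> {0<..<1}. \<not> isCont g t}"
proof -
  have "mono_on {0<..<1} (\<lambda>t. - g t)"
    by (intro mono_onI) (auto intro: slope_antitone)
  then have "countable {t \<in> {0<..<1}. \<not> isCont (\<lambda>t. - g t) t}"
    by (intro mono_on_ctble_discont_open) auto
  moreover have "isCont (\<lambda>t. - g t) t \<longleftrightarrow> isCont g t" for t
    by (auto dest: isCont_minus)
  ultimately show ?thesis
    by simp
qed

end

lemma concave_secant_slope_antitone:
  fixes F :: "real \<Rightarrow> real"
  assumes "concave_on {0..1} F" "0 \<le> r" "r < s" "s < t" "t \<le> 1"
  shows "(F t - F s) / (t - s) \<le> (F s - F r) / (s - r)"
proof -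
  have "convex_on {0..1} (\<lambda>x. - F x)"
    using assms(1) by (simp add: concave_on_def)
  from convex_on_slope_le[OF this, of r t s] assms(2-5)
  have "(F s - F r) / (r - s) \<le> (F t - F r) / (r - t)"
    "(F t - F r) / (r - t) \<le> (F t - F s) / (s - t)"
    by simp_all
  moreover have "(F t - F s) / (s - t) = - ((F t - F s) / (t - s))"
    "(F s - F r) / (r - s) = - ((F s - F r) / (s - r))"
    using assms(3,4) by (simp_all add: divide_simps algebra_simps)
  ultimately show ?thesis
    by linarith
qed

lemma concave_antitone_slope:
  fixes F :: "real \<Rightarrow> real"
  assumes conc: "concave_on {0..1} F" and "F 0 = 0"
    and incr: "\<And>s t. 0 \<le> s \<Longrightarrow> s \<le> t \<Longrightarrow> t \<le> 1 \<Longrightarrow> 0 \<le> F t - F s \<and> F t - F s \<le> t - s"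
  shows "antitone_slope F (\<lambda>t. if t \<le> 0 then 1 else INF s\<in>{0..<t}. (F t - F s) / (t - s))"
proof
  define sl where "sl s t = (F t - F s) / (t - s)" for s t
  define g where "g t = (if t \<le> 0 then 1 else INF s\<in>{0..<t}. sl s t)" for t
  have sl01: "0 \<le> sl s t \<and> sl s t \<le> 1" if "0 \<le> s" "s < t" "t \<le> 1" for s t
    using incr[of s t] that by (auto simp: sl_def divide_le_eq_1)
  have sl_antitone: "sl s t \<le> sl r s" if "0 \<le> r" "r < s" "s < t" "t \<le> 1" for r s t
    using concave_secant_slope_antitone[OF conc that] by (simp add: sl_def)
  have bdd: "bdd_below ((\<lambda>s. sl s t) ` {0..<t})" if "t \<le> 1" for t
    using sl01 that by (intro bdd_belowI[where m=0]) auto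
  have g_le: "g t \<le> sl s t" if "0 \<le> s" "s < t" "t \<le> 1" for s t
    using that bdd[of t] by (auto simp: g_def intro!: cInf_lower)
  have le_g: "sl s t \<le> g s" if "0 \<le> s" "s < t" "t \<le> 1" for s t
  proof (cases "s = 0")
    case True
    then show ?thesis
      using sl01[OF that] by (simp add: g_def)
  next
    case False
    then show ?thesis
      using that sl_antitone[of _ s t] by (auto simp: g_def intro!: cInf_greatest)
  qed
  show "F 0 = 0"
    by fact
  show "0 \<le> g t \<and> g t \<le> 1" if "t \<in> {0..1}" for t
  proof (cases "t \<le> 0")
    case False
    then have "0 \<le> g t"
      using that sl01 by (auto simp: g_def intro!: cInf_greatest)
    moreover have "g t \<le> 1"
      using g_le[of 0 t] sl01[of 0 t] False that by simp
    ultimately show ?thesis ..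
  qed (simp add: g_def)
  show "g t * (t - s) \<le> F t - F s \<and> F t - F s \<le> g s * (t - s)" if "0 \<le> s" "s < t" "t \<le> 1" for s t
    using g_le[OF that] le_g[OF that] that by (simp add: sl_def field_simps)
qed

section \<open>Sections of SI copulas\<close>

lemma concave_section_antitone_slope:
  assumes cop: "copula C" and v: "v \<in> {0..1}" and conc: "concave_on {0..1} (\<lambda>u. C u v)"
  obtains g N where "antitone_slope (\<lambda>u. C u v) g" "negligible N"
    "\<And>t. t \<in> {0..1} - N \<Longrightarrow> d1 C t v = g t"
proof -
  define g where "g = (\<lambda>t. if t \<le> 0 then 1 else INF s\<in>{0..<t}. (C t v - C s v) / (t - s))"
  have slope: "antitone_slope (\<lambda>u. C u v) g"
    unfolding g_def using conc copula_margins[OF cop v] copula_increment_first[OF cop _ _ _ v]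
    by (intro concave_antitone_slope) auto
  interpret antitone_slope "\<lambda>u. C u v" g
    by (rule slope)
  let ?N = "{0, 1} \<union> {t \<in> {0<..<1}. \<not> isCont g t}"
  have "negligible ?N"
    using negligible_countable[OF countable_slope_discontinuities] by simp
  moreover have "d1 C t v = g t" if "t \<in> {0..1} - ?N" for t
    using that by (intro d1_eqI has_real_derivative_at_continuity_point) auto
  ultimately show ?thesis
    using that slope by blast
qed

lemma concave_section_ge_copPi:
  assumes "copula C" "v \<in> {0..1}" "concave_on {0..1} (\<lambda>u. C u v)" "u \<in> {0..1}"
  shows "copPi u v \<le> C u v"
  using concave_onD[OF assms(3), of u 0 1] copula_margins[OF assms(1,2)] assms(4)
  by (simp add: copPi_def algebra_simps)

lemma concave_section_eq_copPi:
  assumes cop: "copula C" and v: "v \<in> {0..1}" and conc: "concave_on {0..1} (\<lambda>u. C u v)"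
    and B: "integral {0..1} (\<lambda>u. C u v) = v / 2"
  shows "\<forall>u\<in>{0..1}. C u v = copPi u v"
proof
  fix u :: real
  assume "u \<in> {0..1}"
  have cont: "continuous_on {0..1} (\<lambda>u. C u v)"
    by (rule continuous_on_first_section[OF copula_continuous_on[OF cop] v])
  have C_int: "((\<lambda>u. C u v) has_integral v / 2) {0..1}"
    unfolding B[symmetric] by (rule integrable_integral[OF integrable_continuous_real[OF cont]])
  have Pi_int: "((\<lambda>u. copPi u v) has_integral v / 2) {0..1}"
    using has_integral_mult_left[OF has_integral_power[of 0 1 1], of v] by (simp add: copPi_def)
  have Pi_cont: "continuous_on {0..1} (\<lambda>u. copPi u v)"
    unfolding copPi_def by (intro continuous_intros)
  have "copPi u v = C u v"
    by (rule eq_of_le_of_same_integral[OF Pi_cont cont _ concave_section_ge_copPi[OF cop v conc]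
          Pi_int C_int \<open>u \<in> {0..1}\<close>]) simp
  then show "C u v = copPi u v"
    by simp
qed

lemma copula_section_eq_copM:
  assumes cop: "copula C" and v: "v \<in> {0..1}"
    and B: "integral {0..1} (\<lambda>u. C u v) = v - v\<^sup>2 / 2"
  shows "\<forall>u\<in>{0..1}. C u v = copM u v"
proof
  fix u :: real
  assume "u \<in> {0..1}"
  have cont: "continuous_on {0..1} (\<lambda>u. C u v)"
    by (rule continuous_on_first_section[OF copula_continuous_on[OF cop] v])
  have C_int: "((\<lambda>u. C u v) has_integral v - v\<^sup>2 / 2) {0..1}"
    unfolding B[symmetric] by (rule integrable_integral[OF integrable_continuous_real[OF cont]])
  have M_int: "((\<lambda>u. copM u v) has_integral v - v\<^sup>2 / 2) {0..1}"
    using has_integral_min_section[OF v] by (simp add: copM_def)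
  have M_cont: "continuous_on {0..1} (\<lambda>u. copM u v)"
    unfolding copM_def by (intro continuous_intros)
  have le: "C x v \<le> copM x v" if "x \<in> {0..1}" for x
    using copula_le_min[OF cop that v] by (simp add: copM_def)
  show "C u v = copM u v"
    by (rule eq_of_le_of_same_integral[OF cont M_cont _ le C_int M_int \<open>u \<in> {0..1}\<close>]) simp
qed

lemma concave_section_d1_sq_bound:
  assumes cop: "copula C" and v: "v \<in> {0..1}" and conc: "concave_on {0..1} (\<lambda>u. C u v)"
  shows "integral {0..1} (\<lambda>t. (d1 C t v)\<^sup>2) \<le> v\<^sup>2 + 2 * integral {0..1} (\<lambda>u. C u v) - v"
    and "integral {0..1} (\<lambda>t. (d1 C t v)\<^sup>2) = v\<^sup>2 + 2 * integral {0..1} (\<lambda>u. C u v) - v \<Longrightarrow>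
      (\<forall>u\<in>{0..1}. C u v = copPi u v) \<or> (\<forall>u\<in>{0..1}. C u v = copM u v)"
proof -
  obtain g N where slope: "antitone_slope (\<lambda>u. C u v) g" and N: "negligible N"
    and d1: "\<And>t. t \<in> {0..1} - N \<Longrightarrow> d1 C t v = g t"
    using concave_section_antitone_slope[OF assms] by blast
  interpret antitone_slope "\<lambda>u. C u v" g
    by (rule slope)
  have A: "integral {0..1} (\<lambda>t. (d1 C t v)\<^sup>2) = integral {0..1} (\<lambda>t. (g t)\<^sup>2)"
    by (rule integral_spike[OF N]) (simp add: d1)
  have C1: "C 1 v = v"
    using copula_margins[OF cop v] by simp
  show "integral {0..1} (\<lambda>t. (d1 C t v)\<^sup>2) \<le> v\<^sup>2 + 2 * integral {0..1} (\<lambda>u. C u v) - v"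
    using slope_sq_integral_le by (simp add: A C1)
  assume eq: "integral {0..1} (\<lambda>t. (d1 C t v)\<^sup>2) = v\<^sup>2 + 2 * integral {0..1} (\<lambda>u. C u v) - v"
  then have "integral {0..1} (\<lambda>t. (g t)\<^sup>2) = v\<^sup>2 \<or> integral {0..1} (\<lambda>t. (g t)\<^sup>2) = v"
    using slope_sq_integral_eq_cases by (simp add: A C1)
  then have "integral {0..1} (\<lambda>u. C u v) = v / 2 \<or> integral {0..1} (\<lambda>u. C u v) = v - v\<^sup>2 / 2"
    using eq A by auto
  then show "(\<forall>u\<in>{0..1}. C u v = copPi u v) \<or> (\<forall>u\<in>{0..1}. C u v = copM u v)"
    using concave_section_eq_copPi[OF assms] copula_section_eq_copM[OF cop v] by blast
qed

lemma copula_sections_not_Pi_and_M: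
  assumes cop: "copula C" and v: "v \<in> {0<..<1}" and w: "w \<in> {0<..<1}"
    and Pi: "\<forall>u\<in>{0..1}. C u v = copPi u v" and M: "\<forall>u\<in>{0..1}. C u w = copM u w"
  shows False
proof (cases rule: linorder_cases[of v w])
  case less
  have "C w w - C w v \<le> C 1 w - C 1 v"
    using copula_2_increasing[OF cop, of w 1 v w] v w less by simp
  then have "v \<le> w * v"
    using v w Pi M copula_margins[OF cop, of v] copula_margins[OF cop, of w]
    by (simp add: copPi_def copM_def)
  then show False
    using v w mult_strict_right_mono[of w 1 v] by simp
next
  case equal
  have "v \<in> {0..1}"
    using v by simp
  then have "C v v = copPi v v" "C v v = copM v v"
    using Pi M equal by auto
  then have "v * v = v"
    by (simp add: copPi_def copM_def)
  then show False
    using v by simp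
next
  case greater
  have "C 0 v - C 0 w \<le> C w v - C w w"
    using copula_2_increasing[OF cop, of 0 w w v] v w greater by simp
  then have "w \<le> w * v"
    using v w Pi M copula_margins[OF cop, of v] copula_margins[OF cop, of w]
    by (simp add: copPi_def copM_def mult.commute)
  then show False
    using v w mult_strict_left_mono[of v 1 w] by simp
qed

lemma eq_on_square_of_sections_off_negligible:
  assumes cop: "copula C" and D: "continuous_on ({0..1} \<times> {0..1}) (\<lambda>(u, v). D u v)"
    and N: "negligible N" and sections: "\<And>v. v \<in> {0<..<1} - N \<Longrightarrow> \<forall>u\<in>{0..1}. C u v = D u v"
  shows "eq_on_square C D"
  unfolding eq_on_square_def
proof (intro ballI)
  fix u v :: real
  assume u: "u \<in> {0..1}" and v: "v \<in> {0..1}"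
  have closure: "closure ({0<..<1} - N) = {0..1::real}"
    using closure_diff_negligible[OF _ N, of "{0<..<1}"] by simp
  have "continuous_on {0..1} (\<lambda>w. C u w - D u w)"
    using continuous_on_second_section[OF copula_continuous_on[OF cop] u]
      continuous_on_second_section[OF D u] by (intro continuous_intros)
  then have "C u v - D u v = 0"
    using continuous_constant_on_closure[of "{0<..<1} - N" "\<lambda>w. C u w - D u w" 0 v] sections u v
    by (simp add: closure)
  then show "C u v = D u v"
    by simp
qed

lemma copula_Pi_or_M_of_sections_ae:
  assumes cop: "copula C" and N: "negligible N"
    and sections: "\<And>v. v \<in> {0..1} - N \<Longrightarrow>
      (\<forall>u\<in>{0..1}. C u v = copPi u v) \<or> (\<forall>u\<in>{0..1}. C u v = copM u v)"
  shows "eq_on_square C copPi \<or> eq_on_square C copM"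
proof -
  obtain v0 where v0: "v0 \<in> {0<..<1}" "v0 \<notin> N"
    by (rule unit_interval_point_off_negligible[OF N])
  have "(\<forall>u\<in>{0..1}. C u v0 = copPi u v0) \<or> (\<forall>u\<in>{0..1}. C u v0 = copM u v0)"
    using sections v0 by auto
  then show ?thesis
  proof
    assume Pi0: "\<forall>u\<in>{0..1}. C u v0 = copPi u v0"
    have "\<forall>u\<in>{0..1}. C u v = copPi u v" if "v \<in> {0<..<1} - N" for v
      using sections[of v] copula_sections_not_Pi_and_M[OF cop _ _ Pi0, of v] v0 that by auto
    then show ?thesis
      using eq_on_square_of_sections_off_negligible[OF cop copPi_continuous_on N] by blast
  next
    assume M0: "\<forall>u\<in>{0..1}. C u v0 = copM u v0"
    have "\<forall>u\<in>{0..1}. C u v = copM u v" if "v \<in> {0<..<1} - N" for v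
      using sections[of v] copula_sections_not_Pi_and_M[OF cop _ _ _ M0, of v] v0 that by auto
    then show ?thesis
      using eq_on_square_of_sections_off_negligible[OF cop copM_continuous_on N] by blast
  qed
qed

lemma copula_section_integral_continuous_on:
  assumes "copula C"
  shows "continuous_on {0..1} (\<lambda>v. integral {0..1} (\<lambda>u. C u v))"
proof -
  have "continuous_on ({0..1} \<times> {0..1}) (\<lambda>(v, u). (u, v))"
    "(\<lambda>(v, u). (u, v)) ` ({0..1} \<times> {0..1}) \<subseteq> {0..1} \<times> {0..1}"
    by (auto simp: split_beta intro!: continuous_intros)
  from continuous_on_compose2[OF copula_continuous_on[OF assms] this]
  have "continuous_on ({0..1} \<times> cbox 0 1) (\<lambda>(v, u). C u v)"
    by (simp add: split_beta)
  from integral_continuous_on_param[OF this] show ?thesis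
    by simp
qed

lemma has_integral_section_bound:
  assumes "copula C"
  shows "((\<lambda>v. v\<^sup>2 + 2 * integral {0..1} (\<lambda>u. C u v) - v)
    has_integral (spearman_rho C + 2) / 6) {0..1}"
proof -
  let ?B = "\<lambda>v. integral {0..1} (\<lambda>u. C u v)"
  have B: "(?B has_integral integral {0..1} ?B) {0..1}"
    using copula_section_integral_continuous_on[OF assms]
    by (simp add: integrable_continuous_real integrable_integral)
  have rho: "spearman_rho C = 12 * integral {0..1} ?B - 3"
    by (rule spearman_rho_iterated[OF copula_continuous_on[OF assms]])
  from has_integral_add[OF has_integral_power[of 0 1 2]
      has_integral_diff[OF has_integral_mult_left[OF B, of 2] has_integral_power[of 0 1 1]]]
  have "((\<lambda>v. v\<^sup>2 + 2 * ?B v - v) has_integral 2 * integral {0..1} ?B - 1 / 6) {0..1}"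
    by (simp add: algebra_simps)
  then show ?thesis
    by (rule has_integral_eq_rhs) (simp add: rho)
qed

lemma SI_spearman_rho_nonneg:
  assumes cop: "copula C" and SI: "SI C"
  shows "0 \<le> spearman_rho C"
proof -
  let ?B = "\<lambda>v. integral {0..1} (\<lambda>u. C u v)"
  have half: "((\<lambda>u. u * c) has_integral c / 2) {0..1}" for c :: real
    using has_integral_mult_left[OF has_integral_power[of 0 1 1], of c] by simp
  have "v / 2 \<le> ?B v" if v: "v \<in> {0..1}" for v
  proof -
    have "concave_on {0..1} (\<lambda>u. C u v)"
      using SI v by (simp add: SI_def)
    moreover have "(\<lambda>u. C u v) integrable_on {0..1}"
      using continuous_on_first_section[OF copula_continuous_on[OF cop] v]
      by (rule integrable_continuous_real)
    ultimately show ?thesis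
      using has_integral_le[OF half integrable_integral] concave_section_ge_copPi[OF cop v]
      by (simp add: copPi_def)
  qed
  moreover have "?B integrable_on {0..1}"
    using copula_section_integral_continuous_on[OF cop] by (rule integrable_continuous_real)
  ultimately have "1 / 4 \<le> integral {0..1} ?B"
    using has_integral_le[OF half[of "1/2"] integrable_integral] by simp
  then show ?thesis
    by (simp add: spearman_rho_iterated[OF copula_continuous_on[OF cop]])
qed

lemma SI_chatterjee_xi_le_spearman_rho:
  assumes cop: "copula C" and SI: "SI C"
  shows "chatterjee_xi C \<le> spearman_rho C"
    and "chatterjee_xi C = spearman_rho C \<Longrightarrow> eq_on_square C copPi \<or> eq_on_square C copM"
proof -
  define A where "A v = integral {0..1} (\<lambda>t. (d1 C t v)\<^sup>2)" for v
  define R where "R v = v\<^sup>2 + 2 * integral {0..1} (\<lambda>u. C u v) - v" for v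
  have conc: "concave_on {0..1} (\<lambda>u. C u v)" if "v \<in> {0..1}" for v
    using SI that by (simp add: SI_def)
  have R: "(R has_integral (spearman_rho C + 2) / 6) {0..1}"
    using has_integral_section_bound[OF cop] by (simp add: R_def[abs_def])
  have xi: "chatterjee_xi C = 6 * integral {0..1} A - 2"
    by (simp add: chatterjee_xi_def A_def[abs_def])
  have A_le_R: "A v \<le> R v" if "v \<in> {0..1}" for v
    using concave_section_d1_sq_bound(1)[OF cop that conc[OF that]] by (simp add: A_def R_def)
  show "chatterjee_xi C \<le> spearman_rho C"
  proof (cases "A integrable_on {0..1}")
    case True
    then have "integral {0..1} A \<le> integral {0..1} R"
      using A_le_R R by (intro integral_le) (auto simp: has_integral_integrable)
    then show ?thesis
      using R by (simp add: xi integral_unique)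
  next
    case False
    \<comment> \<open>then the integral of A has the junk value 0, so \<xi> is -2\<close>
    then show ?thesis
      using SI_spearman_rho_nonneg[OF assms] by (simp add: xi not_integrable_integral)
  qed
  assume eq: "chatterjee_xi C = spearman_rho C"
  have "A integrable_on {0..1}"
  proof (rule ccontr)
    assume "\<not> A integrable_on {0..1}"
    then show False
      using eq SI_spearman_rho_nonneg[OF assms] by (simp add: xi not_integrable_integral)
  qed
  from has_integral_diff[OF R integrable_integral[OF this]]
  have "((\<lambda>v. R v - A v) has_integral 0) {0..1}"
    by (rule has_integral_eq_rhs) (use eq in \<open>simp add: xi\<close>)
  then have N: "negligible {v \<in> {0..1}. R v - A v \<noteq> 0}"
    by (rule has_integral_0_nonneg_imp_negligible) (simp add: A_le_R)
  show "eq_on_square C copPi \<or> eq_on_square C copM"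
  proof (rule copula_Pi_or_M_of_sections_ae[OF cop N])
    fix v
    assume "v \<in> {0..1} - {v \<in> {0..1}. R v - A v \<noteq> 0}"
    then show "(\<forall>u\<in>{0..1}. C u v = copPi u v) \<or> (\<forall>u\<in>{0..1}. C u v = copM u v)"
      using concave_section_d1_sq_bound(2)[OF cop _ conc] by (auto simp: A_def R_def)
  qed
qed

lemma SI_chatterjee_xi_le_abs_spearman_rho:
  assumes "copula C" "SI C"
  shows "chatterjee_xi C \<le> \<bar>spearman_rho C\<bar> \<and> (chatterjee_xi C = \<bar>spearman_rho C\<bar> \<longleftrightarrow>
    eq_on_square C copW \<or> eq_on_square C copPi \<or> eq_on_square C copM)"
  using SI_spearman_rho_nonneg[OF assms] SI_chatterjee_xi_le_spearman_rho[OF assms]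
    chatterjee_xi_eq_abs_spearman_rho_extremal
  by auto

theorem theorem1p3:
  fixes C :: "real \<Rightarrow> real \<Rightarrow> real"
  assumes "copula C"
    and "SI C \<or> SD C"
  shows "chatterjee_xi C \<le> \<bar>spearman_rho C\<bar>
    \<and> (chatterjee_xi C = \<bar>spearman_rho C\<bar> \<longleftrightarrow>
         eq_on_square C copW \<or> eq_on_square C copPi \<or> eq_on_square C copM)"
proof (cases "SI C")
  case True
  then show ?thesis
    using SI_chatterjee_xi_le_abs_spearman_rho[OF assms(1)] by blast
next
  case False
  with assms(2) have "SI (reflect_copula C)"
    by (auto intro: SI_reflect_copula)
  moreover have "(eq_on_square (reflect_copula C) copW \<or> eq_on_square (reflect_copula C) copPi
      \<or> eq_on_square (reflect_copula C) copM)
    \<longleftrightarrow> (eq_on_square C copW \<or> eq_on_square C copPi \<or> eq_on_square C copM)"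
    by (auto simp: eq_on_square_reflect_copula_iff reflect_copula_copW reflect_copula_copM
        reflect_copula_copPi)
  ultimately show ?thesis
    using SI_chatterjee_xi_le_abs_spearman_rho[OF copula_reflect_copula[OF assms(1)]]
    by (simp add: chatterjee_xi_reflect_copula
        spearman_rho_reflect_copula[OF copula_continuous_on[OF assms(1)]])
qed

end
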